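(* Let $C_{\mathbb S}>0$ and $\mathbb{S}^d=\{x\in\mathbb{R}^{d+1}:\langle x,x\rangle=C_{\mathbb S}^{-1}\}$. Let $p\in\mathbb{S}^d$, $w\in T_p\mathbb{S}^d=p^{\perp}$, and let $H_{p,w}=\{x\in\mathbb{S}^d:\langle w,x\rangle=0\}$. If $\langle w,w\rangle=C_{\mathbb S}$, then for all $x\in\mathbb{S}^d$, $$\min_{y\in H_{p,w}}d(x,y)=\frac{1}{\sqrt{C_{\mathbb S}}}\,\mathrm{asin}\,|\langle w,x\rangle|=\frac{1}{\sqrt{C_{\mathbb S}}}\,\big|g_{p_\circ}(w,\log_{p_\circ}(x))\big|,$$ where $p_\circ=C_{\mathbb S}^{-1/2}\|P_w^\perp x\|^{-1}P_w^\perp x\in H_{p,w}$ and $P_w^\perp x=x-\frac{\langle x,w\rangle}{\langle w,w\rangle}w$.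
   Context: $\langle\cdot,\cdot\rangle$ is the standard dot product and $\|\cdot\|$ the Euclidean norm. On $\mathbb{S}^d$ the Riemannian metric is $g_q(u,v)=\langle u,v\rangle$ for $u,v\in T_q\mathbb{S}^d=q^\perp$; the geodesic distance is $d(x,q)=\frac{1}{\sqrt{C_{\mathbb S}}}\mathrm{acos}(C_{\mathbb S}\langle x,q\rangle)$; the logarithmic map is $\log_q(x)=\frac{\theta}{\sin\theta}(x-q\cos\theta)$ with $\theta=\sqrt{C_{\mathbb S}}\,d(x,q)$. *)

theory Defs
  imports "HOL-Analysis.Analysis"
begin

definition sphS :: "real \<Rightarrow> (real ^ 'n) set" where
  "sphS C = {x. x \<bullet> x = inverse C}"

definition distS :: "real \<Rightarrow> real ^ 'n \<Rightarrow> real ^ 'n \<Rightarrow> real" where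
  "distS C x q = (1 / sqrt C) * arccos (C * (x \<bullet> q))"

definition logS :: "real \<Rightarrow> real ^ 'n \<Rightarrow> real ^ 'n \<Rightarrow> real ^ 'n" where
  "logS C q x = (let \<theta> = sqrt C * distS C x q in
     (\<theta> / sin \<theta>) *\<^sub>R (x - cos \<theta> *\<^sub>R q))"

definition gS :: "real ^ 'n \<Rightarrow> real ^ 'n \<Rightarrow> real ^ 'n \<Rightarrow> real" where
  "gS q u v = u \<bullet> v"

definition HS :: "real \<Rightarrow> real ^ 'n \<Rightarrow> real ^ 'n \<Rightarrow> (real ^ 'n) set" where
  "HS C p w = {x \<in> sphS C. w \<bullet> x = 0}"

definition Pperp :: "real ^ 'n \<Rightarrow> real ^ 'n \<Rightarrow> real ^ 'n" where
  "Pperp w x = x - ((x \<bullet> w) / (w \<bullet> w)) *\<^sub>R w"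

definition pcirc :: "real \<Rightarrow> real ^ 'n \<Rightarrow> real ^ 'n \<Rightarrow> real ^ 'n" where
  "pcirc C w x = (inverse (sqrt C) * inverse (norm (Pperp w x))) *\<^sub>R Pperp w x"

end

theory Submission
  imports Defs
begin

text \<open>Write \<open>s = \<langle>w,x\<rangle>\<close> and \<open>P = P\<^sub>w\<^sup>\<perp> x\<close>, so that \<open>x = P + (s/C) w\<close> and
  \<open>C \<langle>P,P\<rangle> = 1 - s\<^sup>2\<close>. For \<open>y \<in> H\<^sub>p\<^sub>,\<^sub>w\<close> we have \<open>\<langle>x,y\<rangle> = \<langle>P,y\<rangle>\<close>, hence by Cauchy-Schwarz
  \<open>C \<langle>x,y\<rangle> \<le> sqrt (1 - s\<^sup>2) = cos (arcsin \<bar>s\<bar>)\<close>, with equality at the normalisation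
  \<open>p\<^sub>\<circ>\<close> of \<open>P\<close>; since \<open>arccos\<close> is decreasing this gives the minimal distance.
  At \<open>p\<^sub>\<circ>\<close> the angle is \<open>\<theta> = arcsin \<bar>s\<bar>\<close>, and as \<open>w \<perp> p\<^sub>\<circ>\<close> the \<open>w\<close>-component of
  \<open>log\<^sub>p\<^sub>\<circ> x\<close> is \<open>(\<theta> / sin \<theta>) s = \<plusminus>\<theta>\<close>.\<close>

lemma inner_Pperp_right: "w \<bullet> Pperp w x = 0"
  by (cases "w = 0") (simp_all add: Pperp_def inner_diff_right inner_commute)

lemma inner_Pperp_orthogonal: "w \<bullet> y = 0 \<Longrightarrow> Pperp w x \<bullet> y = x \<bullet> y"
  by (simp add: Pperp_def inner_diff_left inner_commute[of w y])

lemma inner_Pperp_self_eq: "Pperp w x \<bullet> Pperp w x = x \<bullet> Pperp w x"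
  by (rule inner_Pperp_orthogonal[OF inner_Pperp_right])

lemma inner_Pperp_self: "Pperp w x \<bullet> Pperp w x = x \<bullet> x - (w \<bullet> x)\<^sup>2 / (w \<bullet> w)"
  unfolding inner_Pperp_self_eq
  by (simp add: Pperp_def inner_diff_right inner_commute power2_eq_square)

lemma norm_sphS: "C > 0 \<Longrightarrow> x \<in> sphS C \<Longrightarrow> norm x = 1 / sqrt C"
  by (simp add: sphS_def norm_eq_sqrt_inner real_sqrt_inverse divide_inverse)

lemma abs_inner_sphS_le_1:
  assumes "C > 0" "x \<in> sphS C" "w \<bullet> w = C"
  shows "\<bar>w \<bullet> x\<bar> \<le> 1"
proof -
  have "\<bar>w \<bullet> x\<bar> \<le> norm w * norm x" by (rule Cauchy_Schwarz_ineq2)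
  also have "\<dots> = 1"
    using assms by (simp add: norm_sphS[OF assms(1,2)] norm_eq_sqrt_inner[of w])
  finally show ?thesis .
qed

lemma norm_Pperp_sphS:
  assumes "C > 0" "x \<in> sphS C" "w \<bullet> w = C"
  shows "sqrt C * norm (Pperp w x) = sqrt (1 - (w \<bullet> x)\<^sup>2)"
proof -
  have "C * (Pperp w x \<bullet> Pperp w x) = 1 - (w \<bullet> x)\<^sup>2"
    using assms by (simp add: inner_Pperp_self sphS_def field_simps)
  then show ?thesis
    using assms(1) by (simp add: norm_eq_sqrt_inner real_sqrt_mult[symmetric])
qed

lemma abs_inner_HS_le:
  assumes "C > 0" "x \<in> sphS C" "w \<bullet> w = C" "y \<in> HS C p w"
  shows "\<bar>C * (x \<bullet> y)\<bar> \<le> sqrt (1 - (w \<bullet> x)\<^sup>2)"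
proof -
  have y: "y \<in> sphS C" "w \<bullet> y = 0" using assms(4) by (auto simp: HS_def)
  have "\<bar>C * (x \<bullet> y)\<bar> = C * \<bar>Pperp w x \<bullet> y\<bar>"
    using assms(1) y(2) by (simp add: inner_Pperp_orthogonal abs_mult)
  also have "\<dots> \<le> C * (norm (Pperp w x) * norm y)"
    using assms(1) by (simp add: Cauchy_Schwarz_ineq2)
  also have "\<dots> = C / sqrt C * norm (Pperp w x)"
    using assms(1) y(1) by (simp add: norm_sphS)
  also have "\<dots> = sqrt (1 - (w \<bullet> x)\<^sup>2)"
    using assms(1) norm_Pperp_sphS[OF assms(1-3)] by (simp add: real_div_sqrt)
  finally show ?thesis .
qed

lemma arcsin_eq_arccos_sqrt: "\<bar>s\<bar> \<le> 1 \<Longrightarrow> arccos (sqrt (1 - s\<^sup>2)) = arcsin \<bar>s\<bar>"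
  using arcsin_arccos_sqrt_pos[of "\<bar>s\<bar>"] by simp

lemma distS_HS_ge:
  assumes "C > 0" "x \<in> sphS C" "w \<bullet> w = C" "y \<in> HS C p w"
  shows "(1 / sqrt C) * arcsin \<bar>w \<bullet> x\<bar> \<le> distS C x y"
proof -
  have s: "\<bar>w \<bullet> x\<bar> \<le> 1" by (rule abs_inner_sphS_le_1[OF assms(1-3)])
  have "sqrt (1 - (w \<bullet> x)\<^sup>2) \<le> 1" by simp
  then have "- 1 \<le> C * (x \<bullet> y)" "C * (x \<bullet> y) \<le> sqrt (1 - (w \<bullet> x)\<^sup>2)"
    using abs_inner_HS_le[OF assms, unfolded abs_le_iff] by linarith+
  with \<open>sqrt (1 - (w \<bullet> x)\<^sup>2) \<le> 1\<close>
  have "arccos (sqrt (1 - (w \<bullet> x)\<^sup>2)) \<le> arccos (C * (x \<bullet> y))"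
    by (intro arccos_le_arccos)
  then show ?thesis
    using assms(1) by (simp add: distS_def arcsin_eq_arccos_sqrt[OF s] divide_right_mono)
qed

lemma distS_eq_arcsin:
  "\<bar>s\<bar> \<le> 1 \<Longrightarrow> C * (x \<bullet> y) = sqrt (1 - s\<^sup>2) \<Longrightarrow> distS C x y = (1 / sqrt C) * arcsin \<bar>s\<bar>"
  by (simp add: distS_def arcsin_eq_arccos_sqrt)

lemma pcirc_in_HS:
  assumes "C > 0" "Pperp w x \<noteq> 0"
  shows "pcirc C w x \<in> HS C p w"
proof -
  have "norm (pcirc C w x) = inverse (sqrt C)"
    using assms by (simp add: pcirc_def abs_mult)
  then have "pcirc C w x \<bullet> pcirc C w x = inverse C"
    using assms(1) by (simp add: dot_square_norm power_inverse)
  then show ?thesis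
    by (simp add: HS_def sphS_def pcirc_def inner_Pperp_right)
qed

lemma inner_pcirc:
  assumes "C \<ge> 0"
  shows "C * (x \<bullet> pcirc C w x) = sqrt C * norm (Pperp w x)"
proof (cases "Pperp w x = 0")
  case False
  have "C * (x \<bullet> pcirc C w x) = C / sqrt C * ((norm (Pperp w x))\<^sup>2 / norm (Pperp w x))"
    by (simp add: pcirc_def power2_norm_eq_inner inner_Pperp_self_eq field_simps)
  also have "\<dots> = sqrt C * norm (Pperp w x)"
    using assms False by (simp add: real_div_sqrt power2_eq_square)
  finally show ?thesis .
qed (simp add: pcirc_def)

lemma distS_pcirc:
  assumes "C > 0" "x \<in> sphS C" "w \<bullet> w = C"
  shows "distS C x (pcirc C w x) = (1 / sqrt C) * arcsin \<bar>w \<bullet> x\<bar>"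
  using assms abs_inner_sphS_le_1 norm_Pperp_sphS
  by (intro distS_eq_arcsin) (simp_all add: inner_pcirc)

text \<open>If \<open>P\<^sub>w\<^sup>\<perp> x = 0\<close> then \<open>x = \<plusminus>w/C\<close> is a pole of \<open>H\<^sub>p\<^sub>,\<^sub>w\<close>, at distance \<open>\<pi>/(2 sqrt C)\<close>
  from all of it.\<close>

lemma distS_HS_Pperp_zero:
  assumes "C > 0" "x \<in> sphS C" "w \<bullet> w = C" "Pperp w x = 0" "y \<in> HS C p w"
  shows "distS C x y = (1 / sqrt C) * arcsin \<bar>w \<bullet> x\<bar>"
proof (rule distS_eq_arcsin)
  show "\<bar>w \<bullet> x\<bar> \<le> 1" by (rule abs_inner_sphS_le_1[OF assms(1-3)])
  have "x \<bullet> y = 0"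
    using assms(4,5) inner_Pperp_orthogonal[of w y x] by (simp add: HS_def)
  then show "C * (x \<bullet> y) = sqrt (1 - (w \<bullet> x)\<^sup>2)"
    using norm_Pperp_sphS[OF assms(1-3)] assms(4) by simp
qed

lemma abs_gS_logS_eq_arcsin:
  assumes "w \<bullet> q = 0" "\<bar>w \<bullet> x\<bar> \<le> 1" "sqrt C * distS C x q = arcsin \<bar>w \<bullet> x\<bar>"
  shows "\<bar>gS q w (logS C q x)\<bar> = arcsin \<bar>w \<bullet> x\<bar>"
proof -
  have "gS q w (logS C q x) = (arcsin \<bar>w \<bullet> x\<bar> / \<bar>w \<bullet> x\<bar>) * (w \<bullet> x)"
    using assms by (simp add: logS_def gS_def Let_def inner_diff_right)
  moreover have "arcsin \<bar>w \<bullet> x\<bar> \<ge> 0"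
    using assms(2) by (simp add: arcsin_nonneg)
  ultimately show ?thesis
    \<comment> \<open>for \<open>w \<bullet> x = 0\<close> both sides vanish, the factor being \<open>0 / 0 = 0\<close>\<close>
    by (cases "w \<bullet> x = 0") (simp_all add: abs_mult)
qed

theorem proposition1:
  fixes C :: real and p w x :: "real ^ 'n"
  assumes "C > 0"
    and "p \<in> sphS C"
    and "w \<bullet> p = 0"
    and "w \<bullet> w = C"
    and "x \<in> sphS C"
  shows "(\<exists>y\<in>HS C p w. distS C x y = (1 / sqrt C) * arcsin \<bar>w \<bullet> x\<bar>)
       \<and> (\<forall>y\<in>HS C p w. (1 / sqrt C) * arcsin \<bar>w \<bullet> x\<bar> \<le> distS C x y)
       \<and> (Pperp w x \<noteq> 0 \<longrightarrow>
            pcirc C w x \<in> HS C p w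
          \<and> (1 / sqrt C) * arcsin \<bar>w \<bullet> x\<bar>
              = (1 / sqrt C) * \<bar>gS (pcirc C w x) w (logS C (pcirc C w x) x)\<bar>)"
proof (intro conjI ballI impI)
  note sphere = \<open>C > 0\<close> \<open>x \<in> sphS C\<close> \<open>w \<bullet> w = C\<close>
  have p: "p \<in> HS C p w" using assms(2,3) by (simp add: HS_def)
  show "\<exists>y\<in>HS C p w. distS C x y = (1 / sqrt C) * arcsin \<bar>w \<bullet> x\<bar>"
  proof (cases "Pperp w x = 0")
    case True
    then show ?thesis using distS_HS_Pperp_zero[OF sphere True p] p by blast
  next
    case False
    then show ?thesis using pcirc_in_HS[OF assms(1) False] distS_pcirc[OF sphere] by blast
  qed
  show "(1 / sqrt C) * arcsin \<bar>w \<bullet> x\<bar> \<le> distS C x y" if "y \<in> HS C p w" for y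
    by (rule distS_HS_ge[OF sphere that])
  assume P: "Pperp w x \<noteq> 0"
  show pc: "pcirc C w x \<in> HS C p w" by (rule pcirc_in_HS[OF assms(1) P])
  have "\<bar>gS (pcirc C w x) w (logS C (pcirc C w x) x)\<bar> = arcsin \<bar>w \<bullet> x\<bar>"
    using pc abs_inner_sphS_le_1[OF sphere] distS_pcirc[OF sphere] assms(1)
    by (intro abs_gS_logS_eq_arcsin) (simp_all add: HS_def)
  then show "(1 / sqrt C) * arcsin \<bar>w \<bullet> x\<bar>
      = (1 / sqrt C) * \<bar>gS (pcirc C w x) w (logS C (pcirc C w x) x)\<bar>" by simp
qed

end
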